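(* Consider the single-armed lazy restless bandit described in the context with fixed subsidy $\eta$ and $p_{0,0}>p_{1,0}$, and let $b=\min\left\{1,\frac{R_1-R_0}{\rho_1-\rho_0}\right\}$. Then $\pi\mapsto V_S(\pi)-V_{NS}(\pi)$ is decreasing on $[0,1]$ under any of the following conditions: (1) $K$ is large, i.e. in the large-$K$ model where $\gamma_2(\pi)$ is replaced by the constant $q$; (2) for any $K>1$, when $0<p_{0,0}-p_{1,0}<b/5$ and $\beta\in(0,1)$; (3) for any $K>1$, when $\beta\in(0,b/5)$.
   Context: Single-armed lazy restless bandit: an arm has a hidden state in $\{0,1\}$ evolving as a two-state Markov chain with transition probabilities $p_{i,j}$ ($p_{i,0}+p_{i,1}=1$). During each session the chain makes exactly $K\ge1$ transitions. In each session the decision maker plays the arm or not. If played with the arm in state $i$ at session start, an ACK is received with probability $\rho_i\in[0,1]$ and the expected reward is $R_i$; if not played, subsidy $\eta$ is received and nothing observed. Discount $\beta\in(0,1)$. Standing assumptions: $\rho_0<\rho_1$, $R_0<R_1$. Belief $\pi\in[0,1]$ = probability of state $0$. $R_S(\pi)=\pi R_0+(1-\pi)R_1$, $\rho(\pi)=\pi\rho_0+(1-\pi)\rho_1$, $\gamma_1(\pi)=\frac{(1-\pi)\rho_1p_{1,0}+\pi\rho_0p_{0,0}}{\rho_1(1-\pi)+\rho_0\pi}$, $\gamma_0(\pi)=\frac{(1-\pi)(1-\rho_1)p_{1,0}+\pi(1-\rho_0)p_{0,0}}{(1-\rho_1)(1-\pi)+(1-\rho_0)\pi}$, $\gamma_2(\pi)=(p_{0,0}-p_{1,0})^K\pi+p_{1,0}\sum_{j=0}^{K-1}(p_{0,0}-p_{1,0})^j$.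 $V_S,V_{NS},V$ are the unique bounded solution of $V_S(\pi)=R_S(\pi)+\beta\big(\rho(\pi)V(\gamma_1(\pi))+(1-\rho(\pi))V(\gamma_0(\pi))\big)$, $V_{NS}(\pi)=\eta+\beta V(\gamma_2(\pi))$, $V(\pi)=\max\{V_S(\pi),V_{NS}(\pi)\}$ (a term with zero coefficient is taken to be $0$). Let $q=\frac{p_{1,0}}{1-(p_{0,0}-p_{1,0})}$; the "large-$K$ model" is the same dynamic program with $\gamma_2(\pi)$ replaced by the constant $q$ for all $\pi$. *)

theory Defs
  imports Complex_Main
begin

text \<open>Single-armed lazy restless bandit. Beliefs are probabilities of state 0.
  Transition probabilities p00 = p_{0,0}, p10 = p_{1,0}; p_{0,1} = 1 - p00, p_{1,1} = 1 - p10.\<close>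

definition RS :: "real \<Rightarrow> real \<Rightarrow> real \<Rightarrow> real" where
  "RS R0 R1 \<pi> = \<pi> * R0 + (1 - \<pi>) * R1"

definition rho :: "real \<Rightarrow> real \<Rightarrow> real \<Rightarrow> real" where
  "rho \<rho>0 \<rho>1 \<pi> = \<pi> * \<rho>0 + (1 - \<pi>) * \<rho>1"

definition gamma1 :: "real \<Rightarrow> real \<Rightarrow> real \<Rightarrow> real \<Rightarrow> real \<Rightarrow> real" where
  "gamma1 p00 p10 \<rho>0 \<rho>1 \<pi> =
     ((1 - \<pi>) * \<rho>1 * p10 + \<pi> * \<rho>0 * p00) / (\<rho>1 * (1 - \<pi>) + \<rho>0 * \<pi>)"

definition gamma0 :: "real \<Rightarrow> real \<Rightarrow> real \<Rightarrow> real \<Rightarrow> real \<Rightarrow> real" where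
  "gamma0 p00 p10 \<rho>0 \<rho>1 \<pi> =
     ((1 - \<pi>) * (1 - \<rho>1) * p10 + \<pi> * (1 - \<rho>0) * p00) /
     ((1 - \<rho>1) * (1 - \<pi>) + (1 - \<rho>0) * \<pi>)"

definition gamma2 :: "nat \<Rightarrow> real \<Rightarrow> real \<Rightarrow> real \<Rightarrow> real" where
  "gamma2 K p00 p10 \<pi> = (p00 - p10) ^ K * \<pi> + p10 * (\<Sum>j<K. (p00 - p10) ^ j)"

definition qlim :: "real \<Rightarrow> real \<Rightarrow> real" where
  "qlim p00 p10 = p10 / (1 - (p00 - p10))"

text \<open>A term with zero coefficient contributes 0, which holds
  automatically here since it is multiplied by 0.\<close>

definition bandit_solution ::
  "(real \<Rightarrow> real) \<Rightarrow> real \<Rightarrow> real \<Rightarrow> real \<Rightarrow> real \<Rightarrow> real \<Rightarrow> real \<Rightarrow> real \<Rightarrow> real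
   \<Rightarrow> (real \<Rightarrow> real) \<Rightarrow> (real \<Rightarrow> real) \<Rightarrow> (real \<Rightarrow> real) \<Rightarrow> bool" where
  "bandit_solution g2 p00 p10 \<rho>0 \<rho>1 R0 R1 \<eta> \<beta> VS VNS V \<longleftrightarrow>
     (\<exists>B. \<forall>\<pi>\<in>{0..1}. \<bar>VS \<pi>\<bar> \<le> B \<and> \<bar>VNS \<pi>\<bar> \<le> B \<and> \<bar>V \<pi>\<bar> \<le> B) \<and>
     (\<forall>\<pi>\<in>{0..1}.
        VS \<pi> = RS R0 R1 \<pi> + \<beta> * (rho \<rho>0 \<rho>1 \<pi> * V (gamma1 p00 p10 \<rho>0 \<rho>1 \<pi>)
                 + (1 - rho \<rho>0 \<rho>1 \<pi>) * V (gamma0 p00 p10 \<rho>0 \<rho>1 \<pi>)) \<and>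
        VNS \<pi> = \<eta> + \<beta> * V (g2 \<pi>) \<and>
        V \<pi> = max (VS \<pi>) (VNS \<pi>))"

definition decreasing_on_unit :: "(real \<Rightarrow> real) \<Rightarrow> bool" where
  "decreasing_on_unit f \<longleftrightarrow> (\<forall>x y. 0 \<le> x \<and> x \<le> y \<and> y \<le> 1 \<longrightarrow> f y \<le> f x)"

end

theory Submission
  imports Defs "HOL-Analysis.Convex"
begin

(*
  The value function V is the limit of value iteration started at 0, so it inherits every
  closed property that the Bellman operator preserves. With d = p00 - p10 and
  L = (R1 - R0) / (1 - beta d), the operator preserves: convex, decreasing, and dropping at
  rate at most L on [0,1]. For the active branch, the belief update is a perspective-type
  map, which keeps convexity; by Jensen the expected continuation is at least its value at
  the mean next belief p10 + d pi, which gives monotonicity and a drop rate of d L. The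
  passive branch composes with an affine map of slope s <= 1 (s = d^K, or s = 0 in the
  large-K model). Knowing this shape of V, V_S drops at rate at least R1 - R0 while V_NS
  drops at rate at most beta s L, and beta s L <= R1 - R0 as soon as beta (s + d) <= 1.
*)

section \<open>Functions on the unit interval\<close>

definition drop_rate_le :: "real \<Rightarrow> (real \<Rightarrow> real) \<Rightarrow> bool" where
  "drop_rate_le L f \<longleftrightarrow> (\<forall>x y. 0 \<le> x \<and> x \<le> y \<and> y \<le> 1 \<longrightarrow> f x - f y \<le> L * (y - x))"

lemma decreasing_on_unitI:
  "(\<And>x y. 0 \<le> x \<Longrightarrow> x \<le> y \<Longrightarrow> y \<le> 1 \<Longrightarrow> f y \<le> f x) \<Longrightarrow> decreasing_on_unit f"
  unfolding decreasing_on_unit_def by blast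

lemma decreasing_on_unitD:
  "decreasing_on_unit f \<Longrightarrow> 0 \<le> x \<Longrightarrow> x \<le> y \<Longrightarrow> y \<le> 1 \<Longrightarrow> f y \<le> f x"
  unfolding decreasing_on_unit_def by blast

lemma drop_rate_leI:
  "(\<And>x y. 0 \<le> x \<Longrightarrow> x \<le> y \<Longrightarrow> y \<le> 1 \<Longrightarrow> f x - f y \<le> L * (y - x)) \<Longrightarrow> drop_rate_le L f"
  unfolding drop_rate_le_def by blast

lemma drop_rate_leD:
  "drop_rate_le L f \<Longrightarrow> 0 \<le> x \<Longrightarrow> x \<le> y \<Longrightarrow> y \<le> 1 \<Longrightarrow> f x - f y \<le> L * (y - x)"
  unfolding drop_rate_le_def by blast

lemma convex_on_real_iff:
  fixes f :: "real \<Rightarrow> real"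
  shows "convex_on S f \<longleftrightarrow> convex S \<and>
    (\<forall>x\<in>S. \<forall>y\<in>S. \<forall>t\<in>{0..1}. f (t*x + (1-t)*y) \<le> t * f x + (1-t) * f y)"
  by (auto simp: convex_on_alt)

lemma convex_on_unit_iff:
  fixes f :: "real \<Rightarrow> real"
  shows "convex_on {0..1} f \<longleftrightarrow>
    (\<forall>x\<in>{0..1}. \<forall>y\<in>{0..1}. \<forall>t\<in>{0..1}. f (t*x + (1-t)*y) \<le> t * f x + (1-t) * f y)"
  by (simp add: convex_on_real_iff)

lemma convex_on_unitD:
  fixes f :: "real \<Rightarrow> real"
  assumes "convex_on {0..1} f" "x \<in> {0..1}" "y \<in> {0..1}" "t \<in> {0..1}"
  shows "f (t*x + (1-t)*y) \<le> t * f x + (1-t) * f y"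
  using assms unfolding convex_on_unit_iff by blast

lemma convex_comb_mem_unit:
  "x \<in> {0..1} \<Longrightarrow> y \<in> {0..1} \<Longrightarrow> t \<in> {0..1} \<Longrightarrow> t*x + (1-t)*y \<in> {0..1::real}"
  using convexD[OF convex_real_interval(5)[of 0 1], of x y t "1-t"] by auto

text \<open>Holds also when \<open>a + b = 0\<close>, where the quotient is the junk value 0.\<close>

lemma weighted_average_mult:
  fixes a b p q :: real
  assumes "0 \<le> a" "0 \<le> b"
  shows "(a + b) * ((a*p + b*q) / (a + b)) = a*p + b*q"
  using assms by (cases "a + b = 0") (simp_all add: add_nonneg_eq_0_iff)

lemma weighted_average_unit:
  fixes a b p q :: real
  assumes "0 \<le> a" "0 \<le> b" "p \<in> {0..1}" "q \<in> {0..1}"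
  shows "(a*p + b*q) / (a + b) \<in> {0..1}"
proof -
  have "a*p \<le> a" "b*q \<le> b" using assms by (auto intro: mult_left_le)
  then show ?thesis using assms by (auto simp: divide_le_eq_1)
qed

text \<open>Convexity of the perspective \<open>(w, w c) \<mapsto> w f c\<close> of \<open>f\<close>.\<close>

lemma convex_on_perspective_le:
  fixes f :: "real \<Rightarrow> real"
  assumes f: "convex_on S f" and ab: "a \<in> S" "b \<in> S"
    and vw: "0 \<le> v" "0 \<le> w" and t: "0 \<le> t" "t \<le> 1"
    and u: "u = t*v + (1-t)*w" and uc: "u*c = t*v*a + (1-t)*w*b"
  shows "u * f c \<le> t*v * f a + (1-t)*w * f b"
proof -
  have weights: "0 \<le> t*v" "0 \<le> (1-t)*w" using vw t by simp_all
  show ?thesis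
  proof (cases "u = 0")
    case True
    then have "t*v = 0" "(1-t)*w = 0" using weights u by linarith+
    then show ?thesis using True by auto
  next
    case False
    then have u_pos: "0 < u" using weights u by linarith
    define \<mu> where "\<mu> = t*v/u"
    have \<mu>: "\<mu> \<in> {0..1}" "1 - \<mu> = (1-t)*w/u"
      using u_pos weights by (auto simp: \<mu>_def u field_simps)
    have "c = u*c / u" using u_pos by simp
    also have "\<dots> = t*v/u * a + (1-t)*w/u * b" unfolding uc by (simp add: add_divide_distrib)
    also have "\<dots> = \<mu>*a + (1-\<mu>)*b" unfolding \<mu>(2) by (simp add: \<mu>_def)
    finally have "f c \<le> \<mu> * f a + (1-\<mu>) * f b"
      using f ab \<mu>(1) unfolding convex_on_real_iff by blast
    then have "u * f c \<le> u * (\<mu> * f a + (1-\<mu>) * f b)"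
      using u_pos by simp
    also have "\<dots> = t*v * f a + (1-t)*w * f b"
      unfolding \<mu>(2) using u_pos by (simp add: \<mu>_def field_simps)
    finally show ?thesis .
  qed
qed

lemma convex_on_max:
  assumes "convex_on S f" "convex_on S g"
  shows "convex_on S (\<lambda>x. max (f x) (g x))"
  unfolding convex_on_def
proof (intro conjI ballI allI impI)
  show "convex S" using assms convex_on_imp_convex by blast
next
  fix x y and u v :: real
  assume xy: "x \<in> S" "y \<in> S" and uv: "0 \<le> u" "0 \<le> v" "u + v = 1"
  have "u * f x \<le> u * max (f x) (g x)" "v * f y \<le> v * max (f y) (g y)"
    "u * g x \<le> u * max (f x) (g x)" "v * g y \<le> v * max (f y) (g y)"
    using uv by (simp_all add: mult_left_mono)
  moreover have "f (u *\<^sub>R x + v *\<^sub>R y) \<le> u * f x + v * f y"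
    "g (u *\<^sub>R x + v *\<^sub>R y) \<le> u * g x + v * g y"
    using assms xy uv by (simp_all add: convex_on_def)
  ultimately show "max (f (u *\<^sub>R x + v *\<^sub>R y)) (g (u *\<^sub>R x + v *\<^sub>R y))
      \<le> u * max (f x) (g x) + v * max (f y) (g y)"
    by simp
qed

lemma convex_on_pointwise_limit:
  assumes F: "\<And>n. convex_on S (F n)" and lim: "\<And>x. x \<in> S \<Longrightarrow> (\<lambda>n. F n x) \<longlonglongrightarrow> f x"
  shows "convex_on S f"
  unfolding convex_on_def
proof (intro conjI ballI allI impI)
  show "convex S" using F convex_on_imp_convex by blast
  fix x y and u v :: real
  assume xy: "x \<in> S" "y \<in> S" and uv: "0 \<le> u" "0 \<le> v" "u + v = 1"
  have "u *\<^sub>R x + v *\<^sub>R y \<in> S" using \<open>convex S\<close> xy uv by (simp add: convexD)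
  then have "(\<lambda>n. F n (u *\<^sub>R x + v *\<^sub>R y)) \<longlonglongrightarrow> f (u *\<^sub>R x + v *\<^sub>R y)" by (rule lim)
  moreover have "(\<lambda>n. u * F n x + v * F n y) \<longlonglongrightarrow> u * f x + v * f y"
    using xy by (intro tendsto_intros lim)
  moreover have "\<forall>n. F n (u *\<^sub>R x + v *\<^sub>R y) \<le> u * F n x + v * F n y"
    using F xy uv by (simp add: convex_on_def)
  ultimately show "f (u *\<^sub>R x + v *\<^sub>R y) \<le> u * f x + v * f y"
    using LIMSEQ_le by blast
qed

lemma decreasing_on_unit_pointwise_limit:
  assumes "\<And>n. decreasing_on_unit (F n)" and "\<And>x. x \<in> {0..1} \<Longrightarrow> (\<lambda>n. F n x) \<longlonglongrightarrow> f x"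
  shows "decreasing_on_unit f"
  unfolding decreasing_on_unit_def
proof (intro allI impI)
  fix x y :: real
  assume "0 \<le> x \<and> x \<le> y \<and> y \<le> 1"
  then show "f y \<le> f x"
    using assms LIMSEQ_le[of "\<lambda>n. F n y" "f y" "\<lambda>n. F n x" "f x"]
    by (auto simp: decreasing_on_unit_def)
qed

lemma drop_rate_le_pointwise_limit:
  assumes "\<And>n. drop_rate_le L (F n)" and "\<And>x. x \<in> {0..1} \<Longrightarrow> (\<lambda>n. F n x) \<longlonglongrightarrow> f x"
  shows "drop_rate_le L f"
  unfolding drop_rate_le_def
proof (intro allI impI)
  fix x y :: real
  assume xy: "0 \<le> x \<and> x \<le> y \<and> y \<le> 1"
  then have "(\<lambda>n. F n x - F n y) \<longlonglongrightarrow> f x - f y"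
    using assms(2) by (intro tendsto_intros) auto
  then show "f x - f y \<le> L * (y - x)"
    using assms(1) xy by (auto simp: drop_rate_le_def intro: LIMSEQ_le_const2)
qed

lemma decreasing_on_unit_max:
  "decreasing_on_unit f \<Longrightarrow> decreasing_on_unit g \<Longrightarrow> decreasing_on_unit (\<lambda>x. max (f x) (g x))"
  unfolding decreasing_on_unit_def by (meson max.mono)

lemma drop_rate_le_max:
  "drop_rate_le L f \<Longrightarrow> drop_rate_le L g \<Longrightarrow> drop_rate_le L (\<lambda>x. max (f x) (g x))"
  unfolding drop_rate_le_def by (smt (verit))

lemma convex_on_unit_increment_le:
  fixes g :: "real \<Rightarrow> real"
  assumes g: "convex_on {0..1} g" and xy: "0 \<le> x" "x \<le> y" "y \<le> 1"
  shows "g x + g (y - x) \<le> g 0 + g y"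
proof (cases "y = 0")
  case True
  then have "x = 0" using xy by simp
  then show ?thesis using True by simp
next
  case False
  define t where "t = x/y"
  have t: "t \<in> {0..1}" "1 - t \<in> {0..1}" using xy False by (auto simp: t_def)
  have "x = t*y" "y - x = (1-t)*y" using False by (auto simp: t_def algebra_simps)
  moreover have "g (t*y) \<le> t * g y + (1-t) * g 0"
    using convex_on_unitD[OF g, of y 0 t] t xy by simp
  moreover have "g ((1-t)*y) \<le> (1-t) * g y + t * g 0"
    using convex_on_unitD[OF g, of y 0 "1-t"] t xy by simp
  ultimately show ?thesis by (simp add: algebra_simps)
qed

lemma decreasing_on_unit_if_convex:
  fixes g :: "real \<Rightarrow> real"
  assumes g: "convex_on {0..1} g" and g1: "\<And>x. x \<in> {0..1} \<Longrightarrow> g 1 \<le> g x"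
  shows "decreasing_on_unit g"
  unfolding decreasing_on_unit_def
proof (intro allI impI)
  fix x y :: real
  assume xy: "0 \<le> x \<and> x \<le> y \<and> y \<le> 1"
  show "g y \<le> g x"
  proof (cases "x = 1")
    case True
    then have "y = 1" using xy by simp
    then show ?thesis using True by simp
  next
    case False
    then have x1: "0 < 1 - x" using xy by simp
    define t where "t = (1-y)/(1-x)"
    have t: "t \<in> {0..1}" using xy x1 by (auto simp: t_def)
    have "t * (1-x) = 1 - y" using x1 by (simp add: t_def)
    then have "y = t*x + (1-t)*1" by (simp add: algebra_simps)
    then have "g y \<le> t * g x + (1-t) * g 1"
      using convex_on_unitD[OF g, of x 1 t] t xy by simp
    also have "\<dots> \<le> t * g x + (1-t) * g x"
      using g1[of x] t xy by (intro add_left_mono mult_left_mono) auto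
    finally show ?thesis by (simp add: algebra_simps)
  qed
qed

lemma convex_on_unit_comp_affine:
  fixes f :: "real \<Rightarrow> real"
  assumes f: "convex_on {0..1} f" and range: "\<And>x. x \<in> {0..1} \<Longrightarrow> s*x + c \<in> {0..1}"
  shows "convex_on {0..1} (\<lambda>x. f (s*x + c))"
  unfolding convex_on_unit_iff
proof (intro ballI)
  fix x y t :: real
  assume xyt: "x \<in> {0..1}" "y \<in> {0..1}" "t \<in> {0..1}"
  have "s*(t*x + (1-t)*y) + c = t*(s*x + c) + (1-t)*(s*y + c)" by (simp add: algebra_simps)
  then show "f (s*(t*x + (1-t)*y) + c) \<le> t * f (s*x + c) + (1-t) * f (s*y + c)"
    using f range xyt unfolding convex_on_unit_iff by simp
qed

lemma convex_on_unit_weighted_comp: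
  fixes f w m g :: "real \<Rightarrow> real"
  assumes f: "convex_on {0..1} f"
    and w: "\<And>x y t. w (t*x + (1-t)*y) = t * w x + (1-t) * w y"
    and m: "\<And>x y t. m (t*x + (1-t)*y) = t * m x + (1-t) * m y"
    and w_nonneg: "\<And>x. x \<in> {0..1} \<Longrightarrow> 0 \<le> w x"
    and g_unit: "\<And>x. x \<in> {0..1} \<Longrightarrow> g x \<in> {0..1}"
    and wg: "\<And>x. x \<in> {0..1} \<Longrightarrow> w x * g x = m x"
  shows "convex_on {0..1} (\<lambda>x. w x * f (g x))"
  unfolding convex_on_unit_iff
proof (intro ballI)
  fix x y t :: real
  assume xyt: "x \<in> {0..1}" "y \<in> {0..1}" "t \<in> {0..1}"
  define z where "z = t*x + (1-t)*y"
  have z: "z \<in> {0..1}" using xyt convex_comb_mem_unit by (simp add: z_def)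
  have "w z * g z = t * w x * g x + (1-t) * w y * g y"
    using wg[OF z] wg[OF xyt(1)] wg[OF xyt(2)] m[of t x y] by (simp add: z_def mult.assoc)
  then have "w z * f (g z) \<le> t * w x * f (g x) + (1-t) * w y * f (g y)"
    using xyt g_unit w_nonneg by (intro convex_on_perspective_le[OF f]) (auto simp: z_def w)
  then show "w (t*x + (1-t)*y) * f (g (t*x + (1-t)*y)) \<le> t * (w x * f (g x)) + (1-t) * (w y * f (g y))"
    by (simp add: z_def mult.assoc)
qed

lemma abs_convex_comb_le:
  fixes a b t M :: real
  assumes "\<bar>a\<bar> \<le> M" "\<bar>b\<bar> \<le> M" "t \<in> {0..1}"
  shows "\<bar>t*a + (1-t)*b\<bar> \<le> M"
  using convex_bound_le[of a M b t "1-t"] convex_bound_le[of "-a" M "-b" t "1-t"] assms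
  by (auto simp: abs_le_iff)

lemma abs_max_diff_le: "\<bar>max a b - max c d\<bar> \<le> max \<bar>a - c\<bar> \<bar>b - d\<bar>" for a b c d :: real
  by (simp add: max_def abs_if)

section \<open>The belief update after playing\<close>

locale belief_update =
  fixes p00 p10 \<rho>0 \<rho>1 :: real
  assumes p10_nonneg: "0 \<le> p10" and p10_less_p00: "p10 < p00" and p00_le_1: "p00 \<le> 1"
    and \<rho>0_nonneg: "0 \<le> \<rho>0" and \<rho>0_less_\<rho>1: "\<rho>0 < \<rho>1" and \<rho>1_le_1: "\<rho>1 \<le> 1"
begin

abbreviation \<gamma>1 :: "real \<Rightarrow> real" where "\<gamma>1 \<equiv> gamma1 p00 p10 \<rho>0 \<rho>1"
abbreviation \<gamma>0 :: "real \<Rightarrow> real" where "\<gamma>0 \<equiv> gamma0 p00 p10 \<rho>0 \<rho>1"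

definition play_expect :: "(real \<Rightarrow> real) \<Rightarrow> real \<Rightarrow> real" where
  "play_expect f \<pi> = rho \<rho>0 \<rho>1 \<pi> * f (\<gamma>1 \<pi>) + (1 - rho \<rho>0 \<rho>1 \<pi>) * f (\<gamma>0 \<pi>)"

lemma p00_p10_unit: "p00 \<in> {0..1}" "p10 \<in> {0..1}"
  using p10_nonneg p10_less_p00 p00_le_1 by auto

lemma rho_eq: "rho \<rho>0 \<rho>1 \<pi> = (1-\<pi>)*\<rho>1 + \<pi>*\<rho>0"
  by (simp add: rho_def)

lemma one_minus_rho_eq: "1 - rho \<rho>0 \<rho>1 \<pi> = (1-\<pi>)*(1-\<rho>1) + \<pi>*(1-\<rho>0)"
  by (simp add: rho_def algebra_simps)

lemma gamma1_eq: "\<gamma>1 \<pi> = ((1-\<pi>)*\<rho>1*p10 + \<pi>*\<rho>0*p00) / ((1-\<pi>)*\<rho>1 + \<pi>*\<rho>0)"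
  by (simp add: gamma1_def mult.commute)

lemma gamma0_eq:
  "\<gamma>0 \<pi> = ((1-\<pi>)*(1-\<rho>1)*p10 + \<pi>*(1-\<rho>0)*p00) / ((1-\<pi>)*(1-\<rho>1) + \<pi>*(1-\<rho>0))"
  by (simp add: gamma0_def mult.commute)

lemma update_weights_nonneg:
  assumes "\<pi> \<in> {0..1}"
  shows "0 \<le> (1-\<pi>)*\<rho>1" "0 \<le> \<pi>*\<rho>0" "0 \<le> (1-\<pi>)*(1-\<rho>1)" "0 \<le> \<pi>*(1-\<rho>0)"
  using assms \<rho>0_nonneg \<rho>0_less_\<rho>1 \<rho>1_le_1 by auto

lemma rho_unit: "\<pi> \<in> {0..1} \<Longrightarrow> rho \<rho>0 \<rho>1 \<pi> \<in> {0..1}"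
  using update_weights_nonneg[of \<pi>] rho_eq[of \<pi>] one_minus_rho_eq[of \<pi>] by auto

lemma gamma1_unit: "\<pi> \<in> {0..1} \<Longrightarrow> \<gamma>1 \<pi> \<in> {0..1}"
  unfolding gamma1_eq using update_weights_nonneg p00_p10_unit by (intro weighted_average_unit) auto

lemma gamma0_unit: "\<pi> \<in> {0..1} \<Longrightarrow> \<gamma>0 \<pi> \<in> {0..1}"
  unfolding gamma0_eq using update_weights_nonneg p00_p10_unit by (intro weighted_average_unit) auto

lemma rho_mult_gamma1:
  "\<pi> \<in> {0..1} \<Longrightarrow> rho \<rho>0 \<rho>1 \<pi> * \<gamma>1 \<pi> = (1-\<pi>)*\<rho>1*p10 + \<pi>*\<rho>0*p00"
  unfolding gamma1_eq rho_eq by (intro weighted_average_mult update_weights_nonneg)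

lemma one_minus_rho_mult_gamma0:
  "\<pi> \<in> {0..1} \<Longrightarrow> (1 - rho \<rho>0 \<rho>1 \<pi>) * \<gamma>0 \<pi> = (1-\<pi>)*(1-\<rho>1)*p10 + \<pi>*(1-\<rho>0)*p00"
  unfolding gamma0_eq one_minus_rho_eq by (intro weighted_average_mult update_weights_nonneg)

lemma play_expect_0: "play_expect f 0 = f p10"
proof -
  have "\<gamma>1 0 = p10" using \<rho>0_nonneg \<rho>0_less_\<rho>1 by (simp add: gamma1_def)
  moreover have "(1-\<rho>1) * f (\<gamma>0 0) = (1-\<rho>1) * f p10"
    by (cases "\<rho>1 = 1") (simp_all add: gamma0_def)
  ultimately show ?thesis by (simp add: play_expect_def rho_def algebra_simps)
qed

lemma play_expect_1: "play_expect f 1 = f p00"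
proof -
  have "\<gamma>0 1 = p00" using \<rho>0_less_\<rho>1 \<rho>1_le_1 by (simp add: gamma0_def)
  moreover have "\<rho>0 * f (\<gamma>1 1) = \<rho>0 * f p00"
    by (cases "\<rho>0 = 0") (simp_all add: gamma1_def)
  ultimately show ?thesis by (simp add: play_expect_def rho_def algebra_simps)
qed

lemma jensen_play_expect:
  assumes f: "convex_on {0..1} f" and \<pi>: "\<pi> \<in> {0..1}"
  shows "f (p10 + (p00 - p10)*\<pi>) \<le> play_expect f \<pi>"
proof -
  have "rho \<rho>0 \<rho>1 \<pi> * \<gamma>1 \<pi> + (1 - rho \<rho>0 \<rho>1 \<pi>) * \<gamma>0 \<pi> = p10 + (p00 - p10)*\<pi>"
    unfolding rho_mult_gamma1[OF \<pi>] one_minus_rho_mult_gamma0[OF \<pi>] by (simp add: algebra_simps)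
  then show ?thesis
    using convex_on_unitD[OF f gamma1_unit[OF \<pi>] gamma0_unit[OF \<pi>] rho_unit[OF \<pi>]]
    by (simp add: play_expect_def)
qed

lemma convex_play_expect:
  assumes f: "convex_on {0..1} f"
  shows "convex_on {0..1} (play_expect f)"
proof -
  have "convex_on {0..1} (\<lambda>\<pi>. rho \<rho>0 \<rho>1 \<pi> * f (\<gamma>1 \<pi>))"
    using rho_unit gamma1_unit rho_mult_gamma1
    by (intro convex_on_unit_weighted_comp[OF f, where m = "\<lambda>\<pi>. (1-\<pi>)*\<rho>1*p10 + \<pi>*\<rho>0*p00"])
      (auto simp: rho_def algebra_simps)
  moreover have "convex_on {0..1} (\<lambda>\<pi>. (1 - rho \<rho>0 \<rho>1 \<pi>) * f (\<gamma>0 \<pi>))"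
    using rho_unit gamma0_unit one_minus_rho_mult_gamma0
    by (intro convex_on_unit_weighted_comp[OF f, where m = "\<lambda>\<pi>. (1-\<pi>)*(1-\<rho>1)*p10 + \<pi>*(1-\<rho>0)*p00"])
      (auto simp: rho_def algebra_simps)
  ultimately show ?thesis
    unfolding play_expect_def[abs_def] by (rule convex_on_add)
qed

lemma next_belief_mean_mem:
  assumes "\<pi> \<in> {0..1}"
  shows "p10 + (p00 - p10)*\<pi> \<in> {p10..p00}"
proof -
  have "(p00 - p10)*\<pi> \<le> p00 - p10" "0 \<le> (p00 - p10)*\<pi>"
    using assms p10_less_p00 by (auto intro: mult_left_le)
  then show ?thesis by simp
qed

lemma decreasing_play_expect:
  assumes f: "convex_on {0..1} f" "decreasing_on_unit f"
  shows "decreasing_on_unit (play_expect f)"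
proof (rule decreasing_on_unit_if_convex[OF convex_play_expect[OF f(1)]])
  fix \<pi> :: real
  assume \<pi>: "\<pi> \<in> {0..1}"
  have "play_expect f 1 = f p00" by (rule play_expect_1)
  also have "\<dots> \<le> f (p10 + (p00 - p10)*\<pi>)"
    using decreasing_on_unitD[OF f(2)] next_belief_mean_mem[OF \<pi>] p00_p10_unit by auto
  also have "\<dots> \<le> play_expect f \<pi>" by (rule jensen_play_expect[OF f(1) \<pi>])
  finally show "play_expect f 1 \<le> play_expect f \<pi>" .
qed

lemma drop_rate_play_expect:
  assumes f: "convex_on {0..1} f" "drop_rate_le L f"
  shows "drop_rate_le ((p00 - p10) * L) (play_expect f)"
proof (rule drop_rate_leI)
  fix x y :: real
  assume xy: "0 \<le> x" "x \<le> y" "y \<le> 1"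
  have "play_expect f x - play_expect f y \<le> play_expect f 0 - play_expect f (y - x)"
    using convex_on_unit_increment_le[OF convex_play_expect[OF f(1)] xy] by simp
  also have "\<dots> \<le> f p10 - f (p10 + (p00 - p10)*(y - x))"
    using jensen_play_expect[OF f(1), of "y - x"] xy by (simp add: play_expect_0)
  also have "\<dots> \<le> L * ((p10 + (p00 - p10)*(y - x)) - p10)"
    using next_belief_mean_mem[of "y - x"] p00_p10_unit xy by (intro drop_rate_leD[OF f(2)]) auto
  finally show "play_expect f x - play_expect f y \<le> (p00 - p10) * L * (y - x)"
    by (simp add: algebra_simps)
qed

end

section \<open>Value iteration\<close>

locale lazy_bandit = belief_update +
  fixes R0 R1 \<eta> \<beta> s c :: real and g2 :: "real \<Rightarrow> real"
  assumes R0_less_R1: "R0 < R1" and \<beta>_pos: "0 < \<beta>" and \<beta>_less_1: "\<beta> < 1"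
    and s_nonneg: "0 \<le> s" and s_le_1: "s \<le> 1"
    and g2_affine: "\<And>x. g2 x = s*x + c" and g2_unit: "\<And>x. x \<in> {0..1} \<Longrightarrow> g2 x \<in> {0..1}"
begin

definition L :: real where
  "L = (R1 - R0) / (1 - \<beta>*(p00 - p10))"

definition bellman_S :: "(real \<Rightarrow> real) \<Rightarrow> real \<Rightarrow> real" where
  "bellman_S f \<pi> = RS R0 R1 \<pi> + \<beta> * play_expect f \<pi>"

definition bellman_NS :: "(real \<Rightarrow> real) \<Rightarrow> real \<Rightarrow> real" where
  "bellman_NS f \<pi> = \<eta> + \<beta> * f (g2 \<pi>)"

definition bellman :: "(real \<Rightarrow> real) \<Rightarrow> real \<Rightarrow> real" where
  "bellman f \<pi> = max (bellman_S f \<pi>) (bellman_NS f \<pi>)"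

definition value_shape :: "(real \<Rightarrow> real) \<Rightarrow> bool" where
  "value_shape f \<longleftrightarrow> convex_on {0..1} f \<and> decreasing_on_unit f \<and> drop_rate_le L f"

definition value_iter :: "nat \<Rightarrow> real \<Rightarrow> real" where
  "value_iter n = (bellman ^^ n) (\<lambda>_. 0)"

lemma \<beta>_mult_d_less_1: "\<beta> * (p00 - p10) < 1"
proof -
  have "\<beta> * (p00 - p10) \<le> \<beta>"
    using \<beta>_pos p10_nonneg p00_le_1 by (intro mult_left_le) auto
  then show ?thesis using \<beta>_less_1 by simp
qed

lemma L_nonneg: "0 \<le> L"
  using \<beta>_mult_d_less_1 R0_less_R1 by (simp add: L_def)

lemma L_fixed_point: "R1 - R0 + \<beta>*(p00 - p10)*L = L"
  using \<beta>_mult_d_less_1 by (simp add: L_def field_simps)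

lemma value_shape_bellman_S:
  assumes f: "value_shape f"
  shows "value_shape (bellman_S f)"
proof -
  have f_props: "convex_on {0..1} f" "decreasing_on_unit f" "drop_rate_le L f"
    using f by (simp_all add: value_shape_def)
  have "convex_on {0..1} (RS R0 R1)"
    unfolding convex_on_unit_iff by (simp add: RS_def algebra_simps)
  then have convex: "convex_on {0..1} (bellman_S f)"
    unfolding bellman_S_def[abs_def] using \<beta>_pos convex_play_expect[OF f_props(1)]
    by (intro convex_on_add convex_on_cmul) auto
  have "bellman_S f y \<le> bellman_S f x \<and> bellman_S f x - bellman_S f y \<le> L * (y - x)"
    if xy: "0 \<le> x" "x \<le> y" "y \<le> 1" for x y
  proof -
    let ?dG = "play_expect f x - play_expect f y"
    have "0 \<le> ?dG" using decreasing_on_unitD[OF decreasing_play_expect[OF f_props(1,2)] xy] by simp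
    moreover have "?dG \<le> (p00 - p10) * L * (y - x)"
      by (rule drop_rate_leD[OF drop_rate_play_expect[OF f_props(1,3)] xy])
    ultimately have "0 \<le> \<beta> * ?dG" "\<beta> * ?dG \<le> \<beta> * ((p00 - p10) * L * (y - x))"
      using \<beta>_pos by (simp_all add: mult_left_mono)
    moreover have "bellman_S f x - bellman_S f y = (R1 - R0)*(y - x) + \<beta> * ?dG"
      by (simp add: bellman_S_def RS_def algebra_simps)
    moreover have "(R1 - R0)*(y - x) + \<beta> * ((p00 - p10) * L * (y - x)) = L * (y - x)"
      using L_fixed_point by (metis distrib_right mult.assoc)
    moreover have "0 \<le> (R1 - R0)*(y - x)" using R0_less_R1 xy by simp
    ultimately show ?thesis by linarith
  qed
  then show ?thesis
    unfolding value_shape_def using convex by (auto intro: decreasing_on_unitI drop_rate_leI)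
qed

lemma value_shape_bellman_NS:
  assumes f: "value_shape f"
  shows "value_shape (bellman_NS f)"
proof -
  have f_props: "convex_on {0..1} f" "decreasing_on_unit f" "drop_rate_le L f"
    using f by (simp_all add: value_shape_def)
  have "convex_on {0..1} (\<lambda>\<pi>. f (s*\<pi> + c))"
    using g2_unit by (intro convex_on_unit_comp_affine[OF f_props(1)]) (simp add: g2_affine)
  then have "convex_on {0..1} (\<lambda>\<pi>. \<eta> + \<beta> * f (s*\<pi> + c))"
    using \<beta>_pos by (intro convex_on_add convex_on_cmul) (simp_all add: convex_on_const)
  then have convex: "convex_on {0..1} (bellman_NS f)"
    by (simp add: bellman_NS_def[abs_def] g2_affine)
  have "bellman_NS f y \<le> bellman_NS f x \<and> bellman_NS f x - bellman_NS f y \<le> L * (y - x)"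
    if xy: "0 \<le> x" "x \<le> y" "y \<le> 1" for x y
  proof -
    let ?dF = "f (g2 x) - f (g2 y)"
    have "g2 x \<in> {0..1}" "g2 y \<in> {0..1}" using g2_unit xy by simp_all
    moreover have "g2 x \<le> g2 y" using s_nonneg xy by (simp add: g2_affine mult_left_mono)
    ultimately have g2xy: "0 \<le> g2 x" "g2 x \<le> g2 y" "g2 y \<le> 1" by simp_all
    have dF_nonneg: "0 \<le> ?dF" using decreasing_on_unitD[OF f_props(2) g2xy] by simp
    have "?dF \<le> L * (g2 y - g2 x)" by (rule drop_rate_leD[OF f_props(3) g2xy])
    also have "g2 y - g2 x = s * (y - x)" by (simp add: g2_affine algebra_simps)
    finally have "\<beta> * ?dF \<le> \<beta> * (L * (s * (y - x)))"
      using \<beta>_pos by (intro mult_left_mono) auto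
    also have "\<beta> * (L * (s * (y - x))) \<le> L * (y - x)"
    proof -
      have "\<beta> * s \<le> 1" using \<beta>_pos \<beta>_less_1 s_nonneg s_le_1 by (simp add: mult_le_one)
      then have "(\<beta> * s) * (L * (y - x)) \<le> 1 * (L * (y - x))"
        using L_nonneg xy by (intro mult_right_mono) auto
      then show ?thesis by (simp add: algebra_simps)
    qed
    finally have "\<beta> * ?dF \<le> L * (y - x)" .
    moreover have "0 \<le> \<beta> * ?dF" using dF_nonneg \<beta>_pos by simp
    moreover have "bellman_NS f x - bellman_NS f y = \<beta> * ?dF"
      by (simp add: bellman_NS_def algebra_simps)
    ultimately show ?thesis by linarith
  qed
  then show ?thesis
    unfolding value_shape_def using convex by (auto intro: decreasing_on_unitI drop_rate_leI)
qed

lemma value_shape_bellman: "value_shape f \<Longrightarrow> value_shape (bellman f)"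
  using value_shape_bellman_S value_shape_bellman_NS
  unfolding value_shape_def bellman_def[abs_def]
  by (simp add: convex_on_max decreasing_on_unit_max drop_rate_le_max)

lemma value_shape_value_iter: "value_shape (value_iter n)"
proof (induction n)
  case 0
  show ?case
    using L_nonneg
    by (simp add: value_iter_def value_shape_def convex_on_const decreasing_on_unit_def drop_rate_le_def)
next
  case (Suc n)
  then show ?case using value_shape_bellman by (simp add: value_iter_def)
qed

lemma bellman_dist_le:
  assumes fg: "\<And>\<pi>. \<pi> \<in> {0..1} \<Longrightarrow> \<bar>f \<pi> - g \<pi>\<bar> \<le> M" and x: "x \<in> {0..1}"
  shows "\<bar>bellman f x - bellman g x\<bar> \<le> \<beta> * M"
proof -
  have "play_expect f x - play_expect g x
      = rho \<rho>0 \<rho>1 x * (f (\<gamma>1 x) - g (\<gamma>1 x)) + (1 - rho \<rho>0 \<rho>1 x) * (f (\<gamma>0 x) - g (\<gamma>0 x))"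
    by (simp add: play_expect_def algebra_simps)
  then have "\<bar>play_expect f x - play_expect g x\<bar> \<le> M"
    using fg gamma1_unit[OF x] gamma0_unit[OF x] rho_unit[OF x] by (simp add: abs_convex_comb_le)
  then have S: "\<bar>bellman_S f x - bellman_S g x\<bar> \<le> \<beta> * M"
    using \<beta>_pos by (simp add: bellman_S_def abs_mult flip: right_diff_distrib)
  have "\<bar>f (g2 x) - g (g2 x)\<bar> \<le> M" using fg g2_unit[OF x] .
  then have NS: "\<bar>bellman_NS f x - bellman_NS g x\<bar> \<le> \<beta> * M"
    using \<beta>_pos by (simp add: bellman_NS_def abs_mult flip: right_diff_distrib)
  have "max \<bar>bellman_S f x - bellman_S g x\<bar> \<bar>bellman_NS f x - bellman_NS g x\<bar> \<le> \<beta> * M"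
    using S NS by (rule max.boundedI)
  then show ?thesis
    using abs_max_diff_le[of "bellman_S f x" "bellman_NS f x" "bellman_S g x" "bellman_NS g x"]
    unfolding bellman_def by linarith
qed

lemma bandit_solution_fixed_point:
  assumes "bandit_solution g2 p00 p10 \<rho>0 \<rho>1 R0 R1 \<eta> \<beta> VS VNS V" "\<pi> \<in> {0..1}"
  shows "VS \<pi> = bellman_S V \<pi>" "VNS \<pi> = bellman_NS V \<pi>" "V \<pi> = bellman V \<pi>"
  using assms by (auto simp: bandit_solution_def bellman_S_def bellman_NS_def bellman_def play_expect_def)

lemma value_iter_tendsto:
  assumes sol: "bandit_solution g2 p00 p10 \<rho>0 \<rho>1 R0 R1 \<eta> \<beta> VS VNS V" and \<pi>: "\<pi> \<in> {0..1}"
  shows "(\<lambda>n. value_iter n \<pi>) \<longlonglongrightarrow> V \<pi>"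
proof -
  obtain B where B: "\<And>\<pi>. \<pi> \<in> {0..1} \<Longrightarrow> \<bar>V \<pi>\<bar> \<le> B"
    using sol unfolding bandit_solution_def by blast
  have dist: "\<bar>value_iter n \<pi> - V \<pi>\<bar> \<le> \<beta>^n * B" if "\<pi> \<in> {0..1}" for n \<pi>
    using that
  proof (induction n arbitrary: \<pi>)
    case 0
    then show ?case using B by (simp add: value_iter_def)
  next
    case (Suc n)
    have "\<bar>bellman (value_iter n) \<pi> - bellman V \<pi>\<bar> \<le> \<beta> * (\<beta>^n * B)"
      using Suc.IH Suc.prems by (rule bellman_dist_le)
    moreover have "value_iter (Suc n) \<pi> = bellman (value_iter n) \<pi>"
      by (simp add: value_iter_def)
    moreover have "V \<pi> = bellman V \<pi>"
      by (rule bandit_solution_fixed_point(3)[OF sol Suc.prems])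
    ultimately show ?case by (simp add: mult.assoc)
  qed
  have "norm \<beta> < 1" using \<beta>_pos \<beta>_less_1 by simp
  then have "(\<lambda>n. \<beta>^n) \<longlonglongrightarrow> 0" by (rule LIMSEQ_power_zero)
  moreover have "\<forall>\<^sub>F n in sequentially. norm (value_iter n \<pi> - V \<pi>) \<le> norm (\<beta>^n) * B"
    using dist[OF \<pi>] \<beta>_pos by (intro always_eventually allI) (simp add: norm_power)
  ultimately have "(\<lambda>n. value_iter n \<pi> - V \<pi>) \<longlonglongrightarrow> 0" by (rule tendsto_0_le)
  then show ?thesis by (rule Lim_transform[OF tendsto_const])
qed

lemma value_shape_bandit_solution:
  assumes "bandit_solution g2 p00 p10 \<rho>0 \<rho>1 R0 R1 \<eta> \<beta> VS VNS V"
  shows "value_shape V"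
proof -
  note lim = value_iter_tendsto[OF assms]
  have "convex_on {0..1} V"
    using value_shape_value_iter
    by (intro convex_on_pointwise_limit[OF _ lim]) (simp add: value_shape_def)
  moreover have "decreasing_on_unit V"
    using value_shape_value_iter
    by (intro decreasing_on_unit_pointwise_limit[OF _ lim]) (simp add: value_shape_def)
  moreover have "drop_rate_le L V"
    using value_shape_value_iter
    by (intro drop_rate_le_pointwise_limit[OF _ lim]) (simp add: value_shape_def)
  ultimately show ?thesis by (simp add: value_shape_def)
qed

theorem advantage_decreasing:
  assumes sol: "bandit_solution g2 p00 p10 \<rho>0 \<rho>1 R0 R1 \<eta> \<beta> VS VNS V"
    and small: "\<beta> * (s + (p00 - p10)) \<le> 1"
  shows "decreasing_on_unit (\<lambda>\<pi>. VS \<pi> - VNS \<pi>)"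
proof (rule decreasing_on_unitI)
  fix x y :: real
  assume xy: "0 \<le> x" "x \<le> y" "y \<le> 1"
  have V: "convex_on {0..1} V" "decreasing_on_unit V" "drop_rate_le L V"
    using value_shape_bandit_solution[OF sol] by (simp_all add: value_shape_def)
  have "0 \<le> play_expect V x - play_expect V y"
    using decreasing_on_unitD[OF decreasing_play_expect[OF V(1,2)] xy] by simp
  moreover have "VS x - VS y = (R1 - R0)*(y - x) + \<beta> * (play_expect V x - play_expect V y)"
    using bandit_solution_fixed_point(1)[OF sol, of x] bandit_solution_fixed_point(1)[OF sol, of y] xy
    by (simp add: bellman_S_def RS_def algebra_simps)
  ultimately have S: "(R1 - R0)*(y - x) \<le> VS x - VS y"
    using \<beta>_pos by simp
  have "g2 x \<in> {0..1}" "g2 y \<in> {0..1}" using g2_unit xy by simp_all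
  moreover have "g2 x \<le> g2 y" using s_nonneg xy by (simp add: g2_affine mult_left_mono)
  ultimately have "V (g2 x) - V (g2 y) \<le> L * (g2 y - g2 x)"
    by (intro drop_rate_leD[OF V(3)]) simp_all
  also have "\<dots> = L * s * (y - x)" by (simp add: g2_affine algebra_simps)
  finally have "\<beta> * (V (g2 x) - V (g2 y)) \<le> \<beta> * (L * s * (y - x))"
    using \<beta>_pos by simp
  moreover have "VNS x - VNS y = \<beta> * (V (g2 x) - V (g2 y))"
    using bandit_solution_fixed_point(2)[OF sol, of x] bandit_solution_fixed_point(2)[OF sol, of y] xy
    by (simp add: bellman_NS_def algebra_simps)
  ultimately have "VNS x - VNS y \<le> (\<beta> * s) * (L * (y - x))" by (simp add: ac_simps)
  also have "\<dots> \<le> (1 - \<beta>*(p00 - p10)) * (L * (y - x))"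
    using small L_nonneg xy by (intro mult_right_mono mult_nonneg_nonneg) (simp_all add: algebra_simps)
  also have "\<dots> = (R1 - R0)*(y - x)"
    using \<beta>_mult_d_less_1 by (simp add: L_def)
  finally show "VS y - VNS y \<le> VS x - VNS x" using S by simp
qed

end

section \<open>Passive dynamics: K transitions and the large-K limit\<close>

lemma gamma2_Suc: "gamma2 (Suc K) p00 p10 x = p10 + (p00 - p10) * gamma2 K p00 p10 x"
  unfolding gamma2_def sum.lessThan_Suc_shift by (simp add: sum_distrib_left algebra_simps)

lemma gamma2_unit:
  assumes "0 \<le> p10" "p10 < p00" "p00 \<le> 1" "x \<in> {0..1}"
  shows "gamma2 K p00 p10 x \<in> {0..1}"
proof (induction K)
  case 0
  then show ?case using assms by (simp add: gamma2_def)
next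
  case (Suc K)
  have "(p00 - p10) * gamma2 K p00 p10 x \<le> p00 - p10" "0 \<le> (p00 - p10) * gamma2 K p00 p10 x"
    using Suc assms by (auto intro: mult_left_le)
  then show ?case using assms unfolding gamma2_Suc atLeastAtMost_iff by (intro conjI) linarith+
qed

lemma qlim_unit:
  assumes "0 \<le> p10" "p10 < p00" "p00 \<le> 1"
  shows "qlim p00 p10 \<in> {0..1}"
proof (cases "p00 - p10 = 1")
  case True
  then show ?thesis by (simp add: qlim_def)
next
  case False
  then have "p10 \<le> 1 - (p00 - p10)" "0 < 1 - (p00 - p10)" using assms by auto
  then show ?thesis using assms by (simp add: qlim_def divide_le_eq_1)
qed

lemma discount_bound:
  fixes \<beta> d :: real
  assumes "0 \<le> d" "d \<le> 1" "1 \<le> K" "0 \<le> \<beta>" "\<beta> \<le> 1" and small: "2*d \<le> 1 \<or> 2*\<beta> \<le> 1"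
  shows "\<beta> * (d^K + d) \<le> 1"
proof -
  have "d^K \<le> d^1" using assms by (intro power_decreasing) auto
  then have sum: "d^K + d \<le> 2*d" "d^K + d \<le> 2" using assms by auto
  show ?thesis
    using small
  proof
    assume "2*d \<le> 1"
    then show ?thesis using sum assms mult_le_one[of \<beta> "d^K + d"] by simp
  next
    assume "2*\<beta> \<le> 1"
    then show ?thesis using sum assms mult_left_mono[of "d^K + d" 2 \<beta>] by simp
  qed
qed

theorem lemma4:
  fixes K :: nat and p00 p10 \<rho>0 \<rho>1 R0 R1 \<eta> \<beta> :: real
  assumes "K \<ge> 1"
    and "0 \<le> p00" "p00 \<le> 1" "0 \<le> p10" "p10 \<le> 1"
    and "0 \<le> \<rho>0" "\<rho>0 \<le> 1" "0 \<le> \<rho>1" "\<rho>1 \<le> 1"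
    and "\<rho>0 < \<rho>1" "R0 < R1"
    and "0 < \<beta>" "\<beta> < 1"
    and "p00 > p10"
  defines "b \<equiv> min 1 ((R1 - R0) / (\<rho>1 - \<rho>0))"
  shows
    "(\<forall>VS VNS V. bandit_solution (\<lambda>_. qlim p00 p10) p00 p10 \<rho>0 \<rho>1 R0 R1 \<eta> \<beta> VS VNS V
        \<longrightarrow> decreasing_on_unit (\<lambda>\<pi>. VS \<pi> - VNS \<pi>))
     \<and> (K > 1 \<and> 0 < p00 - p10 \<and> p00 - p10 < b / 5 \<longrightarrow>
        (\<forall>VS VNS V. bandit_solution (gamma2 K p00 p10) p00 p10 \<rho>0 \<rho>1 R0 R1 \<eta> \<beta> VS VNS V
          \<longrightarrow> decreasing_on_unit (\<lambda>\<pi>. VS \<pi> - VNS \<pi>)))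
     \<and> (K > 1 \<and> \<beta> < b / 5 \<longrightarrow>
        (\<forall>VS VNS V. bandit_solution (gamma2 K p00 p10) p00 p10 \<rho>0 \<rho>1 R0 R1 \<eta> \<beta> VS VNS V
          \<longrightarrow> decreasing_on_unit (\<lambda>\<pi>. VS \<pi> - VNS \<pi>)))"
proof -
  interpret large_K: lazy_bandit p00 p10 \<rho>0 \<rho>1 R0 R1 \<eta> \<beta> 0 "qlim p00 p10" "\<lambda>_. qlim p00 p10"
    using assms qlim_unit by unfold_locales auto
  interpret finite_K: lazy_bandit p00 p10 \<rho>0 \<rho>1 R0 R1 \<eta> \<beta>
    "(p00 - p10)^K" "p10 * (\<Sum>j<K. (p00 - p10)^j)" "gamma2 K p00 p10"
    using assms gamma2_unit by unfold_locales (auto simp: gamma2_def power_le_one)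
  have "b \<le> 1" by (simp add: b_def)
  then have "\<beta> * ((p00 - p10)^K + (p00 - p10)) \<le> 1"
    if "p00 - p10 < b / 5 \<or> \<beta> < b / 5"
    using that assms by (intro discount_bound) auto
  then show ?thesis
    using large_K.advantage_decreasing large_K.\<beta>_mult_d_less_1 finite_K.advantage_decreasing
    by auto
qed

end
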